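(* Let $A$ be a $2$-pole with $t(A)=(a+2,\,a,\,n)$. Let $A'$ be the $2$-pole constructed from $A$ as follows: take two disjoint copies of $A$ and four new vertices $x_1,x_2,y_1,y_2$; attach one dangling edge of each copy of $A$ to $x_1$ and the other dangling edge of each copy to $x_2$; add the edges of the path $x_1y_1y_2x_2$; finally add one dangling edge at $y_1$ and one dangling edge at $y_2$ (these two are the dangling edges of $A'$). Then $t(A')=(2a+4,\,2a+2,\,2n+4)$.
   Context: An $r$-pole ($r\in\{2,3\}$) is a finite graph together with $r$ dangling edges, each dangling edge being a half-edge attached to exactly one vertex, such that every vertex has degree $3$ when dangling edges are counted (a $2$-pole arises, e.g., from a $2$-edge-connected cubic graph by cutting one edge into two dangling edges). An even factor of an $r$-pole $P$ is a set $F$ of edges and dangling edges of $P$ such that every vertex of $P$ is incident with either $0$ or $2$ elements of $F$; the number of dangling edges in $F$ is always even. Thus $F$ decomposes into disjoint circuits, isolated vertices (vertices incident with no element of $F$), and, if $F$ contains two dangling edges, one path starting and ending with a dangling edge. The excess of $F$ is $q(P,F)=2c+v$, where $c$ is the number of circuits of $F$ and $v$ is the number of isolated vertices (the path through dangling edges contributes nothing). For an $r$-pole $P$ we set $t(P)=(q_0(P),q_2(P),n(P))$, where $q_0(P)$ is the minimum of $q(P,F)$ over all even factors $F$ containing no dangling edges, $q_2(P)$ is the minimum of $q(P,F)$ over all even factors $F$ containing two dangling edges, and $n(P)$ is the number of vertices of $P$. *)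

theory Defs
  imports Main "HOL-Library.Multiset" "HOL-Library.Extended_Nat"
begin

text \<open>An r-pole is given by a finite vertex set V, a finite edge set E and an
  endpoint map ends: an ordinary edge has a multiset of two endpoints (a loop has
  the same endpoint twice), a dangling edge has exactly one endpoint.\<close>

definition dangling :: "('e \<Rightarrow> 'v multiset) \<Rightarrow> 'e \<Rightarrow> bool" where
  "dangling ends e \<longleftrightarrow> size (ends e) = 1"

definition deg_in :: "('e \<Rightarrow> 'v multiset) \<Rightarrow> 'e set \<Rightarrow> 'v \<Rightarrow> nat" where
  "deg_in ends F v = (\<Sum>e\<in>F. count (ends e) v)"

definition is_pole :: "nat \<Rightarrow> 'v set \<Rightarrow> 'e set \<Rightarrow> ('e \<Rightarrow> 'v multiset) \<Rightarrow> bool" where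
  "is_pole r V E ends \<longleftrightarrow> finite V \<and> finite E
     \<and> (\<forall>e\<in>E. set_mset (ends e) \<subseteq> V \<and> (size (ends e) = 1 \<or> size (ends e) = 2))
     \<and> card {e\<in>E. dangling ends e} = r
     \<and> (\<forall>v\<in>V. deg_in ends E v = 3)"

definition even_factor :: "'v set \<Rightarrow> 'e set \<Rightarrow> ('e \<Rightarrow> 'v multiset) \<Rightarrow> 'e set \<Rightarrow> bool" where
  "even_factor V E ends F \<longleftrightarrow> F \<subseteq> E \<and> (\<forall>v\<in>V. deg_in ends F v = 0 \<or> deg_in ends F v = 2)"

definition fadj :: "('e \<Rightarrow> 'v multiset) \<Rightarrow> 'e set \<Rightarrow> ('v \<times> 'v) set" where
  "fadj ends F = {(u, v). \<exists>e\<in>F. \<not> dangling ends e \<and> ends e = {#u, v#}}"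

definition fcomps :: "'v set \<Rightarrow> ('e \<Rightarrow> 'v multiset) \<Rightarrow> 'e set \<Rightarrow> 'v set set" where
  "fcomps V ends F = {C. \<exists>u\<in>V. deg_in ends F u \<noteq> 0 \<and> C = {w. (u, w) \<in> (fadj ends F)\<^sup>*}}"

definition num_circuits :: "'v set \<Rightarrow> ('e \<Rightarrow> 'v multiset) \<Rightarrow> 'e set \<Rightarrow> nat" where
  "num_circuits V ends F = card {C \<in> fcomps V ends F.
      \<not> (\<exists>e\<in>F. dangling ends e \<and> set_mset (ends e) \<subseteq> C)}"

definition num_isolated :: "'v set \<Rightarrow> ('e \<Rightarrow> 'v multiset) \<Rightarrow> 'e set \<Rightarrow> nat" where
  "num_isolated V ends F = card {v\<in>V. deg_in ends F v = 0}"

definition excess :: "'v set \<Rightarrow> ('e \<Rightarrow> 'v multiset) \<Rightarrow> 'e set \<Rightarrow> nat" where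
  "excess V ends F = 2 * num_circuits V ends F + num_isolated V ends F"

text \<open>Minima are taken in enat, so that the minimum over an empty set is \<infinity>.\<close>
definition q0 :: "'v set \<Rightarrow> 'e set \<Rightarrow> ('e \<Rightarrow> 'v multiset) \<Rightarrow> enat" where
  "q0 V E ends = (INF F \<in> {F. even_factor V E ends F \<and> (\<forall>e\<in>F. \<not> dangling ends e)}.
                    enat (excess V ends F))"

definition q2 :: "'v set \<Rightarrow> 'e set \<Rightarrow> ('e \<Rightarrow> 'v multiset) \<Rightarrow> enat" where
  "q2 V E ends = (INF F \<in> {F. even_factor V E ends F \<and> card {e\<in>F. dangling ends e} = 2}.
                    enat (excess V ends F))"

definition tpole :: "'v set \<Rightarrow> 'e set \<Rightarrow> ('e \<Rightarrow> 'v multiset) \<Rightarrow> enat \<times> enat \<times> nat" where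
  "tpole V E ends = (q0 V E ends, q2 V E ends, card V)"

datatype 'v dv = CV bool 'v | X1 | X2 | Y1 | Y2
datatype 'e de = CE bool 'e | EX1Y1 | EY1Y2 | EY2X2 | DY1 | DY2

definition dbl_V :: "'v set \<Rightarrow> 'v dv set" where
  "dbl_V V = {CV b v | b v. v \<in> V} \<union> {X1, X2, Y1, Y2}"

definition dbl_E :: "'e set \<Rightarrow> 'e de set" where
  "dbl_E E = {CE b e | b e. e \<in> E} \<union> {EX1Y1, EY1Y2, EY2X2, DY1, DY2}"

fun dbl_ends :: "('e \<Rightarrow> 'v multiset) \<Rightarrow> 'e \<Rightarrow> 'e \<Rightarrow> 'e de \<Rightarrow> 'v dv multiset" where
  "dbl_ends ends d1 d2 (CE b e) =
     (if e = d1 then image_mset (CV b) (ends e) + {#X1#}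
      else if e = d2 then image_mset (CV b) (ends e) + {#X2#}
      else image_mset (CV b) (ends e))"
| "dbl_ends ends d1 d2 EX1Y1 = {#X1, Y1#}"
| "dbl_ends ends d1 d2 EY1Y2 = {#Y1, Y2#}"
| "dbl_ends ends d1 d2 EY2X2 = {#Y2, X2#}"
| "dbl_ends ends d1 d2 DY1 = {#Y1#}"
| "dbl_ends ends d1 d2 DY2 = {#Y2#}"

end

theory Submission
  imports Defs
begin

text \<open>
  Let F be an even factor of the doubled pole. Its restrictions to the two copies of A are even
  factors of A; each contains both or neither of the dangling edges of A, as their number is even,
  so its excess is at least q_2(A) or q_0(A) accordingly. Circuits and isolated vertices of the
  copies remain circuits and isolated vertices of F, and all other ones meet the new vertices
  x_1, x_2, y_1, y_2; this gives an exact formula for the excess of F. If a copy uses its dangling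
  edges, x_1 has degree 2 and its component is a circuit unless it reaches a dangling edge at y_1
  or y_2; if both copies use them, x_1 and x_2 are saturated by the copies, which isolates y_1 and
  y_2 or cuts them off from x_1. Since q_0(A) = q_2(A) + 2, this pays for the smaller bound of the
  copies. Conversely, an optimal even factor of one copy through its dangling edges and an optimal
  one of the other copy without dangling edges, joined by x_1 y_1 and y_2 x_2 and completed either
  by y_1 y_2 (one new circuit) or by the two new dangling edges, attain the bounds.
\<close>

lemma enat_INF_attained:
  assumes "(INF x\<in>S. enat (f x)) = enat k"
  shows "\<exists>x\<in>S. f x = k"
proof -
  have "S \<noteq> {}" using assms by (auto simp: top_enat_def)
  then have "(INF x\<in>S. enat (f x)) \<in> (\<lambda>x. enat (f x)) ` S"
    unfolding Inf_enat_def by (auto intro: LeastI)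
  then show ?thesis using assms by auto
qed

section \<open>Circuits of an even factor\<close>

definition circuits :: "'v set \<Rightarrow> ('e \<Rightarrow> 'v multiset) \<Rightarrow> 'e set \<Rightarrow> 'v set set" where
  "circuits V ends F = {C \<in> fcomps V ends F. \<not> (\<exists>e\<in>F. dangling ends e \<and> set_mset (ends e) \<subseteq> C)}"

lemma num_circuits_eq_card_circuits: "num_circuits V ends F = card (circuits V ends F)"
  unfolding num_circuits_def circuits_def ..

lemma finite_fcomps: "finite V \<Longrightarrow> finite (fcomps V ends F)"
  by (rule finite_subset[of _ "(\<lambda>u. {w. (u, w) \<in> (fadj ends F)\<^sup>*}) ` V"]) (auto simp: fcomps_def)

lemma finite_circuits: "finite V \<Longrightarrow> finite (circuits V ends F)"
  by (rule finite_subset[OF _ finite_fcomps]) (auto simp: circuits_def)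

lemma circuits_nonempty: "C \<in> circuits V ends F \<Longrightarrow> C \<noteq> {}"
  unfolding circuits_def fcomps_def by auto

lemma fcomps_closed: "C \<in> fcomps V ends F \<Longrightarrow> x \<in> C \<Longrightarrow> (x, y) \<in> (fadj ends F)\<^sup>* \<Longrightarrow> y \<in> C"
  unfolding fcomps_def by auto

lemma fadj_of_edge: "e \<in> F \<Longrightarrow> ends e = {#u, w#} \<Longrightarrow> (u, w) \<in> fadj ends F"
  unfolding fadj_def dangling_def by (auto intro!: bexI[of _ e])

lemma sym_fadj: "sym (fadj ends F)"
  unfolding fadj_def sym_def by (auto simp: add_mset_commute)

lemma fadj_rtrancl_sym: "(u, v) \<in> (fadj ends F)\<^sup>* \<Longrightarrow> (v, u) \<in> (fadj ends F)\<^sup>*"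
  using sym_rtrancl[OF sym_fadj] by (rule symD)

lemma fadj_component_eq:
  "(u, v) \<in> (fadj ends F)\<^sup>* \<Longrightarrow> {w. (u, w) \<in> (fadj ends F)\<^sup>*} = {w. (v, w) \<in> (fadj ends F)\<^sup>*}"
  by (blast intro: rtrancl_trans fadj_rtrancl_sym)

section \<open>Parity of dangling edges\<close>

lemma sum_deg_in_eq_sum_size:
  assumes "finite V" and "\<And>e. e \<in> F \<Longrightarrow> set_mset (ends e) \<subseteq> V"
  shows "(\<Sum>v\<in>V. deg_in ends F v) = (\<Sum>e\<in>F. size (ends e))"
proof -
  have "(\<Sum>v\<in>V. deg_in ends F v) = (\<Sum>e\<in>F. \<Sum>v\<in>V. count (ends e) v)"
    unfolding deg_in_def by (rule sum.swap)
  also have "\<dots> = (\<Sum>e\<in>F. size (ends e))"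
  proof (rule sum.cong[OF refl])
    fix e assume "e \<in> F"
    then have "(\<Sum>v\<in>V. count (ends e) v) = (\<Sum>v\<in>set_mset (ends e). count (ends e) v)"
      using assms by (intro sum.mono_neutral_right) (auto simp: count_eq_zero_iff)
    then show "(\<Sum>v\<in>V. count (ends e) v) = size (ends e)"
      by (simp add: size_multiset_overloaded_eq)
  qed
  finally show ?thesis .
qed

lemma even_card_dangling:
  assumes pole: "is_pole r V E ends" and F: "even_factor V E ends F"
  shows "even (card {e\<in>F. dangling ends e})"
proof -
  have FE: "F \<subseteq> E" using F by (simp add: even_factor_def)
  then have "finite F" using pole finite_subset by (auto simp: is_pole_def)
  have "even (\<Sum>v\<in>V. deg_in ends F v)"
    using F unfolding even_factor_def by (auto intro!: dvd_sum)
  moreover have "(\<Sum>v\<in>V. deg_in ends F v) = (\<Sum>e\<in>F. size (ends e))"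
    using pole FE by (intro sum_deg_in_eq_sum_size) (auto simp: is_pole_def)
  moreover have "(\<Sum>e\<in>F. size (ends e)) = (\<Sum>e\<in>F. if dangling ends e then 1 else 2)"
    using pole FE unfolding is_pole_def dangling_def by (intro sum.cong) auto
  moreover have "(\<Sum>e\<in>F. if dangling ends e then 1 else 2::nat)
      = card {e\<in>F. dangling ends e} + 2 * card (F \<inter> - {e. dangling ends e})"
    using \<open>finite F\<close> by (simp add: sum.If_cases Int_def conj_commute)
  ultimately show ?thesis by simp
qed

section \<open>Two-poles\<close>

locale two_pole =
  fixes V :: "'v set" and E :: "'e set" and ends :: "'e \<Rightarrow> 'v multiset" and d1 d2 :: 'e
  assumes pole: "is_pole 2 V E ends"
    and d1_in_E: "d1 \<in> E" and d2_in_E: "d2 \<in> E" and d1_neq_d2: "d1 \<noteq> d2"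
    and dangling_d1: "dangling ends d1" and dangling_d2: "dangling ends d2"
begin

lemma finite_V: "finite V" and finite_E: "finite E"
  and size_ends: "e \<in> E \<Longrightarrow> size (ends e) = 1 \<or> size (ends e) = 2"
  using pole unfolding is_pole_def by auto

lemma dangling_edges: "{e\<in>E. dangling ends e} = {d1, d2}"
proof -
  have "{d1, d2} \<subseteq> {e\<in>E. dangling ends e}"
    using d1_in_E d2_in_E dangling_d1 dangling_d2 by auto
  moreover have "card {e\<in>E. dangling ends e} = card {d1, d2}"
    using pole d1_neq_d2 by (simp add: is_pole_def)
  moreover have "finite {e\<in>E. dangling ends e}" using finite_E by simp
  ultimately show ?thesis using card_subset_eq by metis
qed

lemma size_ends_ordinary: "e \<in> E \<Longrightarrow> e \<noteq> d1 \<Longrightarrow> e \<noteq> d2 \<Longrightarrow> size (ends e) = 2"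
  using size_ends dangling_edges unfolding dangling_def by blast

definition end_d1 :: 'v where "end_d1 = (SOME z. ends d1 = {#z#})"
definition end_d2 :: 'v where "end_d2 = (SOME z. ends d2 = {#z#})"

lemma ends_d1: "ends d1 = {#end_d1#}"
proof -
  have "\<exists>z. ends d1 = {#z#}" using dangling_d1 size_1_singleton_mset unfolding dangling_def by blast
  then show ?thesis unfolding end_d1_def by (rule someI_ex)
qed

lemma ends_d2: "ends d2 = {#end_d2#}"
proof -
  have "\<exists>z. ends d2 = {#z#}" using dangling_d2 size_1_singleton_mset unfolding dangling_def by blast
  then show ?thesis unfolding end_d2_def by (rule someI_ex)
qed

lemma even_factor_d1_iff_d2:
  assumes "even_factor V E ends G"
  shows "d1 \<in> G \<longleftrightarrow> d2 \<in> G"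
proof -
  have "{e\<in>G. dangling ends e} = G \<inter> {d1, d2}"
    using assms dangling_edges unfolding even_factor_def by blast
  then have "even (card (G \<inter> {d1, d2}))" using even_card_dangling[OF pole assms] by simp
  then show ?thesis using d1_neq_d2
    by (cases "d1 \<in> G"; cases "d2 \<in> G") (auto simp: Int_insert_right)
qed

lemma even_factor_dangling_edges:
  assumes "even_factor V E ends G"
  shows "{e\<in>G. dangling ends e} = (if d1 \<in> G then {d1, d2} else {})"
  using assms dangling_edges even_factor_d1_iff_d2[OF assms] unfolding even_factor_def by auto

lemma excess_ge_if_dangling:
  assumes c0: "enat c0 \<le> q0 V E ends" and c2: "enat c2 \<le> q2 V E ends"
    and G: "even_factor V E ends G"
  shows "(if d1 \<in> G then c2 else c0) \<le> excess V ends G"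
proof (cases "d1 \<in> G")
  case True
  then have "q2 V E ends \<le> enat (excess V ends G)"
    unfolding q2_def using G d1_neq_d2 even_factor_dangling_edges[OF G] by (intro INF_lower) simp
  with c2 have "enat c2 \<le> enat (excess V ends G)" by (rule order_trans)
  then show ?thesis using True by simp
next
  case False
  then have "q0 V E ends \<le> enat (excess V ends G)"
    unfolding q0_def using G even_factor_dangling_edges[OF G] by (intro INF_lower) auto
  with c0 have "enat c0 \<le> enat (excess V ends G)" by (rule order_trans)
  then show ?thesis using False by simp
qed

end

section \<open>The doubled two-pole\<close>

definition copy_edges :: "'e de set \<Rightarrow> bool \<Rightarrow> 'e set" where
  "copy_edges F b = {e. CE b e \<in> F}"

definition gadget_edges :: "'e de set" where
  "gadget_edges = {EX1Y1, EY1Y2, EY2X2, DY1, DY2}"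

definition gadget :: "'v dv set" where
  "gadget = {X1, X2, Y1, Y2}"

definition glue :: "'e set \<Rightarrow> 'e set \<Rightarrow> 'e de set \<Rightarrow> 'e de set" where
  "glue G G' S = CE True ` G \<union> CE False ` G' \<union> S"

lemma copy_edges_glue:
  assumes "S \<subseteq> gadget_edges"
  shows "copy_edges (glue G G' S) True = G" and "copy_edges (glue G G' S) False = G'"
  using assms by (auto simp: copy_edges_def glue_def gadget_edges_def)

lemma glue_copy_edges: "F = glue (copy_edges F True) (copy_edges F False) (gadget_edges \<inter> F)"
proof -
  have "x \<in> glue (copy_edges F True) (copy_edges F False) (gadget_edges \<inter> F)" if "x \<in> F" for x
  proof (cases x)
    case (CE b e)
    with that show ?thesis by (cases b) (auto simp: glue_def copy_edges_def)
  qed (use that in \<open>auto simp: glue_def gadget_edges_def\<close>)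
  then show ?thesis by (auto simp: glue_def copy_edges_def)
qed

lemma card_image_CV [simp]: "card (CV b ` A) = card A"
  by (rule card_image) (auto simp: inj_on_def)

lemma count_image_CV: "count (image_mset (CV b) M) (CV c w) = (if b = c then count M w else 0)"
  by (induction M) auto

lemma count_image_CV_gadget: "s \<in> gadget \<Longrightarrow> count (image_mset (CV b) M) s = 0"
  by (auto simp: gadget_def count_image_mset)

context two_pole
begin

abbreviation "dV \<equiv> dbl_V V"
abbreviation "dE \<equiv> dbl_E E"
abbreviation "dends \<equiv> dbl_ends ends d1 d2"

lemma CE_in_dbl_E [simp]: "CE b e \<in> dE \<longleftrightarrow> e \<in> E"
  and gadget_edges_dbl_E: "gadget_edges \<subseteq> dE"
  by (auto simp: dbl_E_def gadget_edges_def)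

lemma CV_in_dbl_V [simp]: "CV b v \<in> dV \<longleftrightarrow> v \<in> V"
  and gadget_dbl_V: "gadget \<subseteq> dV"
  by (auto simp: dbl_V_def gadget_def)

lemma dbl_V_eq: "dV = CV True ` V \<union> CV False ` V \<union> gadget"
  by (auto simp: dbl_V_def gadget_def)

lemma card_dbl_V: "card dV = 2 * card V + 4"
proof -
  have "card dV = card (CV True ` V \<union> CV False ` V) + card (gadget :: 'v dv set)"
    unfolding dbl_V_eq by (rule card_Un_disjoint) (auto simp: finite_V gadget_def)
  also have "card (CV True ` V \<union> CV False ` V) = card (CV True ` V) + card (CV False ` V)"
    by (rule card_Un_disjoint) (auto simp: finite_V)
  finally show ?thesis by (simp add: gadget_def)
qed

lemma finite_dbl_V: "finite dV"
  by (simp add: dbl_V_eq finite_V gadget_def)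

lemma glue_subset_dbl_E: "G \<subseteq> E \<Longrightarrow> G' \<subseteq> E \<Longrightarrow> S \<subseteq> gadget_edges \<Longrightarrow> glue G G' S \<subseteq> dE"
  using gadget_edges_dbl_E by (auto simp: glue_def)

lemma copy_edges_subset: "F \<subseteq> dE \<Longrightarrow> copy_edges F b \<subseteq> E"
  unfolding copy_edges_def by auto

lemma finite_copy_edges: "F \<subseteq> dE \<Longrightarrow> finite (copy_edges F b)"
  using copy_edges_subset finite_E by (rule finite_subset)

lemma dends_d1: "dends (CE b d1) = {#CV b end_d1, X1#}"
  by (simp add: ends_d1)

lemma dends_d2: "dends (CE b d2) = {#CV b end_d2, X2#}"
  using d1_neq_d2 by (simp add: ends_d2)

lemma count_dends_CV: "count (dends (CE b e)) (CV c w) = (if b = c then count (ends e) w else 0)"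
  by (simp add: count_image_CV)

lemma count_dends_gadget:
  "count (dends (CE b e)) X1 = of_bool (e = d1)" "count (dends (CE b e)) X2 = of_bool (e = d2)"
  "count (dends (CE b e)) Y1 = 0" "count (dends (CE b e)) Y2 = 0"
  using d1_neq_d2 by (simp_all add: count_image_CV_gadget gadget_def)

lemma deg_in_dbl:
  assumes "F \<subseteq> dE"
  shows "deg_in dends F v = (\<Sum>e\<in>copy_edges F True. count (dends (CE True e)) v)
      + (\<Sum>e\<in>copy_edges F False. count (dends (CE False e)) v)
      + (\<Sum>e\<in>gadget_edges. if e \<in> F then count (dends e) v else 0)"
proof -
  note fin = finite_copy_edges[OF assms]
  have "deg_in dends F v = deg_in dends (glue (copy_edges F True) (copy_edges F False) (gadget_edges \<inter> F)) v"
    by (subst glue_copy_edges) simp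
  also have "\<dots> = deg_in dends (CE True ` copy_edges F True) v + deg_in dends (CE False ` copy_edges F False) v
      + deg_in dends (gadget_edges \<inter> F) v"
    unfolding deg_in_def glue_def
    by (subst sum.union_disjoint, use fin in \<open>auto simp: gadget_edges_def\<close>)+
  finally show ?thesis
    unfolding deg_in_def by (simp add: sum.reindex inj_on_def sum.inter_restrict gadget_edges_def)
qed

lemma deg_in_CV:
  assumes "F \<subseteq> dE"
  shows "deg_in dends F (CV b w) = deg_in ends (copy_edges F b) w"
  unfolding deg_in_dbl[OF assms] count_dends_CV
  by (cases b) (simp_all add: gadget_edges_def deg_in_def)

lemma deg_in_gadget:
  assumes "F \<subseteq> dE"
  shows "deg_in dends F X1
      = of_bool (d1 \<in> copy_edges F True) + of_bool (d1 \<in> copy_edges F False) + of_bool (EX1Y1 \<in> F)"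
    and "deg_in dends F X2
      = of_bool (d2 \<in> copy_edges F True) + of_bool (d2 \<in> copy_edges F False) + of_bool (EY2X2 \<in> F)"
    and "deg_in dends F Y1 = of_bool (EX1Y1 \<in> F) + of_bool (EY1Y2 \<in> F) + of_bool (DY1 \<in> F)"
    and "deg_in dends F Y2 = of_bool (EY1Y2 \<in> F) + of_bool (EY2X2 \<in> F) + of_bool (DY2 \<in> F)"
  unfolding deg_in_dbl[OF assms] count_dends_gadget
  by (simp_all add: gadget_edges_def finite_copy_edges[OF assms] sum.delta')

lemma dangling_dbl_iff: "e \<in> dE \<Longrightarrow> dangling dends e \<longleftrightarrow> e = DY1 \<or> e = DY2"
proof (cases e)
  case (CE b x)
  assume "e \<in> dE"
  then have "x \<in> E" using CE by simp
  then show ?thesis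
    using CE dends_d1 dends_d2 size_ends_ordinary[of x] unfolding dangling_def by (cases "x = d1 \<or> x = d2") auto
qed (auto simp: dangling_def)

lemma even_factor_copy:
  assumes "even_factor dV dE dends F"
  shows "even_factor V E ends (copy_edges F b)"
proof -
  have F: "F \<subseteq> dE" using assms by (simp add: even_factor_def)
  show ?thesis
    unfolding even_factor_def
  proof (intro conjI ballI copy_edges_subset[OF F])
    fix v assume "v \<in> V"
    then show "deg_in ends (copy_edges F b) v = 0 \<or> deg_in ends (copy_edges F b) v = 2"
      using assms deg_in_CV[OF F, of b v] CV_in_dbl_V[of b v] unfolding even_factor_def by metis
  qed
qed

definition gadget_isolated :: "'e de set \<Rightarrow> 'v dv set" where
  "gadget_isolated F = {s \<in> gadget. deg_in dends F s = 0}"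

definition gadget_circuits :: "'e de set \<Rightarrow> 'v dv set set" where
  "gadget_circuits F = {K \<in> circuits dV dends F. K \<inter> gadget \<noteq> {}}"

definition lifted_circuits :: "'e de set \<Rightarrow> 'v dv set set" where
  "lifted_circuits F = image (CV True) ` circuits V ends (copy_edges F True)
     \<union> image (CV False) ` circuits V ends (copy_edges F False)"

lemma num_isolated_dbl:
  assumes F: "F \<subseteq> dE"
  shows "num_isolated dV dends F = num_isolated V ends (copy_edges F True)
      + num_isolated V ends (copy_edges F False) + card (gadget_isolated F)"
proof -
  let ?A = "\<lambda>b. {v\<in>V. deg_in ends (copy_edges F b) v = 0}"
  have eq: "{v\<in>dV. deg_in dends F v = 0} = CV True ` ?A True \<union> CV False ` ?A False \<union> gadget_isolated F"
    unfolding dbl_V_eq gadget_isolated_def using deg_in_CV[OF F] by auto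
  have fin: "finite (?A b)" for b using finite_V by simp
  have "card (CV True ` ?A True \<union> CV False ` ?A False \<union> gadget_isolated F)
      = card (CV True ` ?A True) + card (CV False ` ?A False) + card (gadget_isolated F)"
    using fin by (subst card_Un_disjoint; auto simp: gadget_isolated_def gadget_def card_Un_disjoint)+
  then show ?thesis unfolding num_isolated_def eq by simp
qed

lemma fadj_copy_lift:
  assumes "(u, w) \<in> fadj ends (copy_edges F b)"
  shows "(CV b u, CV b w) \<in> fadj dends F"
proof -
  obtain e where e: "CE b e \<in> F" "\<not> dangling ends e" "ends e = {#u, w#}"
    using assms unfolding fadj_def copy_edges_def by auto
  then have "e \<noteq> d1" "e \<noteq> d2" using dangling_d1 dangling_d2 by auto
  then show ?thesis using e by (intro fadj_of_edge[OF e(1)]) simp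
qed

lemma rtrancl_fadj_copy_lift:
  assumes "(u, w) \<in> (fadj ends (copy_edges F b))\<^sup>*"
  shows "(CV b u, CV b w) \<in> (fadj dends F)\<^sup>*"
  using assms by induction (auto intro: rtrancl_into_rtrancl fadj_copy_lift)

lemma fadj_exit_d1: "d1 \<in> copy_edges F b \<Longrightarrow> (CV b end_d1, X1) \<in> fadj dends F"
  by (rule fadj_of_edge[of "CE b d1"]) (simp_all add: copy_edges_def dends_d1 del: dbl_ends.simps)

lemma fadj_exit_d2: "d2 \<in> copy_edges F b \<Longrightarrow> (CV b end_d2, X2) \<in> fadj dends F"
  by (rule fadj_of_edge[of "CE b d2"]) (simp_all add: copy_edges_def dends_d2 del: dbl_ends.simps)

lemma fadj_from_copy_vertex:
  assumes F: "F \<subseteq> dE" and "(CV b p, z) \<in> fadj dends F"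
  shows "(\<exists>q. z = CV b q \<and> (p, q) \<in> fadj ends (copy_edges F b))
    \<or> (p = end_d1 \<and> d1 \<in> copy_edges F b \<and> z = X1) \<or> (p = end_d2 \<and> d2 \<in> copy_edges F b \<and> z = X2)"
proof -
  obtain e' where e': "e' \<in> F" "dends e' = {#CV b p, z#}"
    using assms(2) unfolding fadj_def by auto
  then have "CV b p \<in># dends e'" by simp
  then obtain e where e'_eq: "e' = CE b e"
    by (cases e') (auto simp: count_image_CV simp flip: count_greater_zero_iff split: if_splits)
  have e: "e \<in> copy_edges F b" using e'(1) e'_eq by (simp add: copy_edges_def)
  consider "e = d1" | "e = d2" | "e \<noteq> d1" "e \<noteq> d2" by blast
  then show ?thesis
  proof cases
    case 1
    then have "{#CV b end_d1, X1#} = {#CV b p, z#}" using e'(2) e'_eq dends_d1 by metis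
    then show ?thesis using e 1 by (auto simp: add_eq_conv_ex)
  next
    case 2
    then have "{#CV b end_d2, X2#} = {#CV b p, z#}" using e'(2) e'_eq dends_d2 by metis
    then show ?thesis using e 2 by (auto simp: add_eq_conv_ex)
  next
    case 3
    then have im: "image_mset (CV b) (ends e) = {#CV b p, z#}" using e'(2) e'_eq by simp
    obtain M a where M: "ends e = add_mset a M" "a = p" "image_mset (CV b) M = {#z#}"
      using msed_map_invR[OF im] by auto
    moreover obtain q where "M = {#q#}" "z = CV b q"
      using msed_map_invR[of "CV b" M z "{#}"] M(3) by auto
    ultimately have "ends e = {#p, q#}" "z = CV b q" by simp_all
    moreover have "\<not> dangling ends e" using calculation(1) by (simp add: dangling_def)
    ultimately show ?thesis using e unfolding fadj_def by blast
  qed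
qed

lemma component_copy_vertex:
  assumes F: "F \<subseteq> dE" and C: "C = {w. (u, w) \<in> (fadj ends (copy_edges F b))\<^sup>*}"
    and closed: "\<not> (\<exists>e\<in>copy_edges F b. dangling ends e \<and> set_mset (ends e) \<subseteq> C)"
  shows "{w'. (CV b u, w') \<in> (fadj dends F)\<^sup>*} = CV b ` C"
proof
  show "CV b ` C \<subseteq> {w'. (CV b u, w') \<in> (fadj dends F)\<^sup>*}"
    using rtrancl_fadj_copy_lift C by auto
next
  show "{w'. (CV b u, w') \<in> (fadj dends F)\<^sup>*} \<subseteq> CV b ` C"
  proof
    fix w' assume "w' \<in> {w'. (CV b u, w') \<in> (fadj dends F)\<^sup>*}"
    then have "(CV b u, w') \<in> (fadj dends F)\<^sup>*" by simp
    then show "w' \<in> CV b ` C"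
    proof (induction rule: rtrancl_induct)
      case base
      then show ?case using C by auto
    next
      case (step y z)
      then obtain p where p: "y = CV b p" "(u, p) \<in> (fadj ends (copy_edges F b))\<^sup>*"
        using C by auto
      from fadj_from_copy_vertex[OF F step(2)[unfolded p(1)]] show ?case
      proof (elim disjE exE conjE)
        fix q assume "z = CV b q" "(p, q) \<in> fadj ends (copy_edges F b)"
        then show ?thesis using p(2) C by (auto intro: rtrancl_into_rtrancl)
      next
        assume "p = end_d1" "d1 \<in> copy_edges F b"
        then show ?thesis using closed dangling_d1 ends_d1 p(2) C by auto
      next
        assume "p = end_d2" "d2 \<in> copy_edges F b"
        then show ?thesis using closed dangling_d2 ends_d2 p(2) C by auto
      qed
    qed
  qed
qed

lemma circuit_copy_lift:
  assumes F: "F \<subseteq> dE" and C: "C \<in> circuits V ends (copy_edges F b)"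
  shows "CV b ` C \<in> circuits dV dends F"
proof -
  obtain u where u: "u \<in> V" "deg_in ends (copy_edges F b) u \<noteq> 0"
      "C = {w. (u, w) \<in> (fadj ends (copy_edges F b))\<^sup>*}"
    using C unfolding circuits_def fcomps_def by auto
  have closed: "\<not> (\<exists>e\<in>copy_edges F b. dangling ends e \<and> set_mset (ends e) \<subseteq> C)"
    using C unfolding circuits_def by auto
  have "CV b ` C \<in> fcomps dV dends F"
    unfolding fcomps_def using u(1,2) component_copy_vertex[OF F u(3) closed] deg_in_CV[OF F]
    by (intro CollectI bexI[of _ "CV b u"]) auto
  moreover have "\<not> set_mset (dends e) \<subseteq> CV b ` C" if "e \<in> F" "dangling dends e" for e
  proof -
    have "e = DY1 \<or> e = DY2" using that F dangling_dbl_iff by blast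
    then show ?thesis by auto
  qed
  ultimately show ?thesis unfolding circuits_def by blast
qed

lemma copy_reaches_gadget:
  assumes F: "F \<subseteq> dE" and e: "e \<in> copy_edges F b" "dangling ends e"
    and reach: "set_mset (ends e) \<subseteq> {x. (w, x) \<in> (fadj ends (copy_edges F b))\<^sup>*}"
  shows "(CV b w, X1) \<in> (fadj dends F)\<^sup>* \<or> (CV b w, X2) \<in> (fadj dends F)\<^sup>*"
proof -
  have "e = d1 \<or> e = d2" using e dangling_edges copy_edges_subset[OF F] by auto
  then show ?thesis
  proof
    assume "e = d1"
    then have "(CV b w, CV b end_d1) \<in> (fadj dends F)\<^sup>*"
      using reach ends_d1 rtrancl_fadj_copy_lift by simp
    then show ?thesis
      using fadj_exit_d1 e(1) \<open>e = d1\<close> by (blast intro: rtrancl_into_rtrancl)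
  next
    assume "e = d2"
    then have "(CV b w, CV b end_d2) \<in> (fadj dends F)\<^sup>*"
      using reach ends_d2 rtrancl_fadj_copy_lift by simp
    then show ?thesis
      using fadj_exit_d2 e(1) \<open>e = d2\<close> by (blast intro: rtrancl_into_rtrancl)
  qed
qed

lemma circuit_dbl_cases:
  assumes F: "F \<subseteq> dE" and K: "K \<in> circuits dV dends F"
  shows "K \<in> lifted_circuits F \<or> K \<inter> gadget \<noteq> {}"
proof -
  obtain u where u: "u \<in> dV" "deg_in dends F u \<noteq> 0" "K = {w. (u, w) \<in> (fadj dends F)\<^sup>*}"
    using K unfolding circuits_def fcomps_def by blast
  have "u \<in> K" using u(3) by simp
  show ?thesis
  proof (cases "u \<in> gadget")
    case True
    with \<open>u \<in> K\<close> show ?thesis by blast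
  next
    case False
    then obtain b w where CV: "u = CV b w" using u(1) by (auto simp: dbl_V_eq)
    have w: "w \<in> V" "deg_in ends (copy_edges F b) w \<noteq> 0"
      using u(1,2) CV deg_in_CV[OF F] by simp_all
    define C where "C = {x. (w, x) \<in> (fadj ends (copy_edges F b))\<^sup>*}"
    show ?thesis
    proof (cases "\<exists>e\<in>copy_edges F b. dangling ends e \<and> set_mset (ends e) \<subseteq> C")
      case False
      then have "C \<in> circuits V ends (copy_edges F b)"
        unfolding circuits_def fcomps_def using w C_def False by blast
      moreover have "K = CV b ` C"
        using component_copy_vertex[OF F C_def False] u(3) CV by simp
      ultimately have "K \<in> image (CV b) ` circuits V ends (copy_edges F b)" by blast
      then show ?thesis by (cases b) (simp_all add: lifted_circuits_def)
    next
      case True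
      then obtain e where e: "e \<in> copy_edges F b" "dangling ends e" "set_mset (ends e) \<subseteq> C"
        by blast
      then have "X1 \<in> K \<or> X2 \<in> K"
        using copy_reaches_gadget[OF F] u(3) CV C_def by blast
      then show ?thesis by (auto simp: gadget_def)
    qed
  qed
qed

lemma finite_gadget_circuits: "finite (gadget_circuits F)"
  unfolding gadget_circuits_def by (rule finite_subset[OF _ finite_circuits[OF finite_dbl_V]]) auto

lemma card_lifted_circuits:
  "card (lifted_circuits F) = num_circuits V ends (copy_edges F True) + num_circuits V ends (copy_edges F False)"
proof -
  let ?C = "\<lambda>b. circuits V ends (copy_edges F b)"
  have inj: "inj_on (image (CV b)) X" for b :: bool and X :: "'v set set"
    by (rule inj_onI) (simp add: inj_image_eq_iff inj_def)
  have "image (CV True) ` ?C True \<inter> image (CV False) ` ?C False = {}"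
  proof (rule equals0I)
    fix K assume "K \<in> image (CV True) ` ?C True \<inter> image (CV False) ` ?C False"
    then obtain X Y where "X \<in> ?C True" "K = CV True ` X" "K = CV False ` Y" by blast
    moreover obtain x where "x \<in> X" using circuits_nonempty[OF \<open>X \<in> ?C True\<close>] by blast
    ultimately have "CV True x \<in> CV False ` Y" by blast
    then show False by blast
  qed
  then have "card (lifted_circuits F) = card (image (CV True) ` ?C True) + card (image (CV False) ` ?C False)"
    unfolding lifted_circuits_def by (rule card_Un_disjoint[rotated 2]) (simp_all add: finite_circuits[OF finite_V])
  then show ?thesis by (simp add: card_image[OF inj] num_circuits_eq_card_circuits)
qed

lemma circuits_dbl:
  assumes F: "F \<subseteq> dE"
  shows "circuits dV dends F = lifted_circuits F \<union> gadget_circuits F"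
    and "lifted_circuits F \<inter> gadget_circuits F = {}"
  using circuit_dbl_cases[OF F] circuit_copy_lift[OF F]
  by (auto simp: lifted_circuits_def gadget_circuits_def gadget_def)

lemma num_circuits_dbl:
  assumes F: "F \<subseteq> dE"
  shows "num_circuits dV dends F = num_circuits V ends (copy_edges F True)
      + num_circuits V ends (copy_edges F False) + card (gadget_circuits F)"
proof -
  have "finite (lifted_circuits F)"
    by (simp add: lifted_circuits_def finite_circuits[OF finite_V])
  then show ?thesis
    unfolding num_circuits_eq_card_circuits[of dV] circuits_dbl(1)[OF F]
    using card_Un_disjoint[OF _ finite_gadget_circuits circuits_dbl(2)[OF F]] card_lifted_circuits
    by simp
qed

lemma excess_dbl:
  assumes "F \<subseteq> dE"
  shows "excess dV dends F = excess V ends (copy_edges F True) + excess V ends (copy_edges F False)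
      + 2 * card (gadget_circuits F) + card (gadget_isolated F)"
  using num_circuits_dbl[OF assms] num_isolated_dbl[OF assms] by (simp add: excess_def)

lemma fadj_path_edges:
  "EX1Y1 \<in> F \<Longrightarrow> (X1, Y1) \<in> fadj dends F"
  "EY1Y2 \<in> F \<Longrightarrow> (Y1, Y2) \<in> fadj dends F"
  "EY2X2 \<in> F \<Longrightarrow> (Y2, X2) \<in> fadj dends F"
  by (auto intro: fadj_of_edge[of EX1Y1] fadj_of_edge[of EY1Y2] fadj_of_edge[of EY2X2])

lemma fadj_rtrancl_Y_closed:
  assumes F: "F \<subseteq> dE" and "EX1Y1 \<notin> F" and "EY2X2 \<notin> F"
    and "(y, w) \<in> (fadj dends F)\<^sup>*" and "y \<in> {Y1, Y2}"
  shows "w \<in> {Y1, Y2}"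
  using assms(4,5)
proof (induction rule: rtrancl_induct)
  case (step p z)
  obtain e where e: "e \<in> F" "\<not> dangling dends e" "dends e = {#p, z#}"
    using step(2) unfolding fadj_def by auto
  have p: "p \<in> {Y1, Y2}" using step by blast
  have "p \<in># dends e" using e(3) by simp
  then show ?case
  proof (cases e)
    case (CE c x)
    then show ?thesis using \<open>p \<in># dends e\<close> p count_dends_gadget(3,4)[of c x]
      by (auto simp del: dbl_ends.simps simp: count_eq_zero_iff)
  next
    case EY1Y2
    then show ?thesis using e(3) p by (auto simp: add_eq_conv_ex)
  qed (use e assms(2,3) p in \<open>auto simp: dangling_def\<close>)
qed simp

lemma gadget_degrees_even:
  assumes "even_factor dV dE dends F"
  shows "deg_in dends F X1 \<in> {0, 2}" and "deg_in dends F X2 \<in> {0, 2}"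
    and "deg_in dends F Y1 \<in> {0, 2}" and "deg_in dends F Y2 \<in> {0, 2}"
  using assms gadget_dbl_V by (auto simp: even_factor_def gadget_def)

lemma card_gadget_circuits_pos:
  assumes F: "F \<subseteq> dE" and deg: "deg_in dends F X1 \<noteq> 0"
    and closed: "\<And>e. e \<in> F \<Longrightarrow> dangling dends e \<Longrightarrow>
      \<not> set_mset (dends e) \<subseteq> {w. (X1, w) \<in> (fadj dends F)\<^sup>*}"
  shows "0 < card (gadget_circuits F)"
proof -
  let ?K = "{w. (X1, w) \<in> (fadj dends F)\<^sup>*}"
  have "X1 \<in> dV" using gadget_dbl_V by (simp add: gadget_def)
  then have "?K \<in> fcomps dV dends F"
    unfolding fcomps_def using deg by (intro CollectI bexI[of _ X1]) simp_all
  moreover have "X1 \<in> ?K \<inter> gadget" by (simp add: gadget_def)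
  ultimately have "?K \<in> gadget_circuits F"
    using closed unfolding gadget_circuits_def circuits_def by auto
  then show ?thesis using finite_gadget_circuits card_gt_0_iff by blast
qed

lemma excess_dbl_ge:
  assumes c0: "enat c0 \<le> q0 V E ends" and c2: "enat c2 \<le> q2 V E ends"
    and F: "even_factor dV dE dends F"
  shows "(if d1 \<in> copy_edges F True then c2 else c0) + (if d1 \<in> copy_edges F False then c2 else c0)
      + 2 * card (gadget_circuits F) + card (gadget_isolated F) \<le> excess dV dends F"
proof -
  have FE: "F \<subseteq> dE" using F by (simp add: even_factor_def)
  show ?thesis
    unfolding excess_dbl[OF FE]
    by (intro add_mono order_refl excess_ge_if_dangling[OF c0 c2 even_factor_copy[OF F]])
qed

lemma excess_dbl_ge_closed:
  assumes c0: "enat c0 \<le> q0 V E ends" and c2: "enat c2 \<le> q2 V E ends"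
    and F: "even_factor dV dE dends F" and closed: "\<forall>e\<in>F. \<not> dangling dends e"
  shows "min (2 * c0) (min (c0 + c2 + 2) (2 * c2 + 4)) \<le> excess dV dends F"
proof -
  have FE: "F \<subseteq> dE" using F by (simp add: even_factor_def)
  note bound = excess_dbl_ge[OF c0 c2 F] and deg = deg_in_gadget[OF FE]
    and even = gadget_degrees_even[OF F]
  have no_DY: "DY1 \<notin> F" "DY2 \<notin> F" using closed by (auto simp: dangling_def)
  have circuit: "0 < card (gadget_circuits F)" if "deg_in dends F X1 \<noteq> 0"
    using card_gadget_circuits_pos[OF FE that] closed by blast
  consider "d1 \<notin> copy_edges F True" "d1 \<notin> copy_edges F False"
    | "d1 \<in> copy_edges F True \<longleftrightarrow> d1 \<notin> copy_edges F False"
    | "d1 \<in> copy_edges F True" "d1 \<in> copy_edges F False" by blast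
  then show ?thesis
  proof cases
    case 1
    then show ?thesis using bound by simp
  next
    case 2
    then have "deg_in dends F X1 \<noteq> 0" using deg(1) by auto
    then show ?thesis using bound 2 circuit by (cases "d1 \<in> copy_edges F True") auto
  next
    case 3
    \<comment> \<open>x_1 is saturated by the two copies, so y_1 y_2 would be the only edge left at y_1\<close>
    then have "EX1Y1 \<notin> F" using deg(1) even(1) by (cases "EX1Y1 \<in> F") simp_all
    then have "EY1Y2 \<notin> F" using deg(3) even(3) no_DY by (cases "EY1Y2 \<in> F") simp_all
    then have "deg_in dends F Y1 = 0" "deg_in dends F Y2 = 0"
      using \<open>EX1Y1 \<notin> F\<close> deg(3,4) even(4) no_DY by (cases "EY2X2 \<in> F"; simp)+
    then have "{Y1, Y2} \<subseteq> gadget_isolated F"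
      by (simp add: gadget_isolated_def gadget_def)
    then have "card {Y1, Y2 :: 'v dv} \<le> card (gadget_isolated F)"
      by (rule card_mono[rotated]) (simp add: gadget_isolated_def gadget_def)
    then have "2 \<le> card (gadget_isolated F)" by simp
    moreover have "deg_in dends F X1 \<noteq> 0" using deg(1) 3 by simp
    ultimately show ?thesis using bound 3 circuit by simp
  qed
qed

lemma excess_dbl_ge_open:
  assumes c0: "enat c0 \<le> q0 V E ends" and c2: "enat c2 \<le> q2 V E ends"
    and F: "even_factor dV dE dends F" and two: "card {e\<in>F. dangling dends e} = 2"
  shows "min (2 * c0) (min (c0 + c2) (2 * c2 + 2)) \<le> excess dV dends F"
proof -
  have FE: "F \<subseteq> dE" using F by (simp add: even_factor_def)
  note bound = excess_dbl_ge[OF c0 c2 F] and deg = deg_in_gadget[OF FE]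
    and even = gadget_degrees_even[OF F]
  consider "d1 \<notin> copy_edges F True" "d1 \<notin> copy_edges F False"
    | "d1 \<in> copy_edges F True \<longleftrightarrow> d1 \<notin> copy_edges F False"
    | "d1 \<in> copy_edges F True" "d1 \<in> copy_edges F False" by blast
  then show ?thesis
  proof cases
    case 1
    then show ?thesis using bound by simp
  next
    case 2
    then show ?thesis using bound by (cases "d1 \<in> copy_edges F True") auto
  next
    case 3
    moreover have "d2 \<in> copy_edges F b \<longleftrightarrow> d1 \<in> copy_edges F b" for b
      using even_factor_d1_iff_d2[OF even_factor_copy[OF F]] by blast
    ultimately have "EX1Y1 \<notin> F" "EY2X2 \<notin> F" "deg_in dends F X1 \<noteq> 0"
      using deg(1,2) even(1,2) by (cases "EX1Y1 \<in> F"; cases "EY2X2 \<in> F"; simp)+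
    let ?K = "{w. (X1, w) \<in> (fadj dends F)\<^sup>*}"
    have not_K: "Y \<notin> ?K" if "Y \<in> {Y1, Y2}" for Y
    proof
      assume "Y \<in> ?K"
      then have "(Y, X1) \<in> (fadj dends F)\<^sup>*" by (simp add: fadj_rtrancl_sym)
      then have "X1 \<in> {Y1, Y2 :: 'v dv}"
        by (rule fadj_rtrancl_Y_closed[OF FE \<open>EX1Y1 \<notin> F\<close> \<open>EY2X2 \<notin> F\<close> _ that])
      then show False by simp
    qed
    have "e = DY1 \<or> e = DY2" if "e \<in> F" "dangling dends e" for e
      using that FE dangling_dbl_iff by blast
    then have "\<not> set_mset (dends e) \<subseteq> ?K" if "e \<in> F" "dangling dends e" for e
      using that not_K[of Y1] not_K[of Y2] by fastforce
    then have "0 < card (gadget_circuits F)"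
      by (rule card_gadget_circuits_pos[OF FE \<open>deg_in dends F X1 \<noteq> 0\<close>])
    then show ?thesis using bound 3 by simp
  qed
qed

lemma q0_dbl_ge:
  assumes "enat c0 \<le> q0 V E ends" and "enat c2 \<le> q2 V E ends"
  shows "enat (min (2 * c0) (min (c0 + c2 + 2) (2 * c2 + 4))) \<le> q0 dV dE dends"
  unfolding q0_def using excess_dbl_ge_closed[OF assms] by (auto intro!: INF_greatest)

lemma q2_dbl_ge:
  assumes "enat c0 \<le> q0 V E ends" and "enat c2 \<le> q2 V E ends"
  shows "enat (min (2 * c0) (min (c0 + c2) (2 * c2 + 2))) \<le> q2 dV dE dends"
  unfolding q2_def using excess_dbl_ge_open[OF assms] by (auto intro!: INF_greatest)

lemma glue_even_factor_excess:
  assumes G: "even_factor V E ends G" "d1 \<in> G"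
    and G': "even_factor V E ends G'" "\<forall>e\<in>G'. \<not> dangling ends e"
    and S: "S \<subseteq> gadget_edges" "EX1Y1 \<in> S" "EY2X2 \<in> S"
    and Y: "deg_in dends (glue G G' S) Y1 = 2" "deg_in dends (glue G G' S) Y2 = 2"
  shows "even_factor dV dE dends (glue G G' S)"
    and "excess dV dends (glue G G' S)
      = excess V ends G + excess V ends G' + 2 * card (gadget_circuits (glue G G' S))"
proof -
  let ?F = "glue G G' S"
  have FE: "?F \<subseteq> dE"
    using G(1) G'(1) S(1) by (intro glue_subset_dbl_E) (auto simp: even_factor_def)
  note copies = copy_edges_glue[OF S(1)]
  have "d2 \<in> G" using even_factor_d1_iff_d2[OF G(1)] G(2) by simp
  moreover have "d1 \<notin> G'" "d2 \<notin> G'" using G'(2) dangling_d1 dangling_d2 by auto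
  moreover have "EX1Y1 \<in> ?F" "EY2X2 \<in> ?F" using S(2,3) by (simp_all add: glue_def)
  ultimately have "deg_in dends ?F X1 = 2" "deg_in dends ?F X2 = 2"
    using deg_in_gadget(1,2)[OF FE] copies G(2) by simp_all
  then have deg_gadget: "deg_in dends ?F s = 2" if "s \<in> gadget" for s
    using that Y by (auto simp: gadget_def)
  show "even_factor dV dE dends ?F"
    unfolding even_factor_def
  proof (intro conjI ballI FE)
    fix v assume "v \<in> dV"
    then consider b w where "v = CV b w" "w \<in> V" | "v \<in> gadget" by (auto simp: dbl_V_eq)
    then show "deg_in dends ?F v = 0 \<or> deg_in dends ?F v = 2"
    proof cases
      case (1 b w)
      then show ?thesis
        using deg_in_CV[OF FE] copies G(1) G'(1) unfolding even_factor_def by (cases b) simp_all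
    qed (simp add: deg_gadget)
  qed
  have "gadget_isolated ?F = {}" using deg_gadget by (auto simp: gadget_isolated_def)
  then show "excess dV dends ?F = excess V ends G + excess V ends G' + 2 * card (gadget_circuits ?F)"
    using excess_dbl[OF FE] copies by simp
qed


lemma card_gadget_circuits_le_1:
  assumes path: "EX1Y1 \<in> F" "EY1Y2 \<in> F" "EY2X2 \<in> F"
  shows "card (gadget_circuits F) \<le> 1"
proof -
  let ?K = "{w. (X1, w) \<in> (fadj dends F)\<^sup>*}"
  have reach: "(X1, s) \<in> (fadj dends F)\<^sup>*" if "s \<in> gadget" for s
  proof -
    have "(X1, Y1) \<in> (fadj dends F)\<^sup>*" using fadj_path_edges(1)[OF path(1)] by (rule r_into_rtrancl)
    moreover from this have "(X1, Y2) \<in> (fadj dends F)\<^sup>*"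
      using fadj_path_edges(2)[OF path(2)] by (rule rtrancl_into_rtrancl)
    moreover from this have "(X1, X2) \<in> (fadj dends F)\<^sup>*"
      using fadj_path_edges(3)[OF path(3)] by (rule rtrancl_into_rtrancl)
    ultimately show ?thesis using that by (auto simp: gadget_def)
  qed
  have "gadget_circuits F \<subseteq> {?K}"
  proof
    fix K assume "K \<in> gadget_circuits F"
    then have "K \<in> fcomps dV dends F" and "K \<inter> gadget \<noteq> {}"
      by (simp_all add: gadget_circuits_def circuits_def)
    then obtain u s where u: "K = {w. (u, w) \<in> (fadj dends F)\<^sup>*}" and s: "s \<in> K" "s \<in> gadget"
      unfolding fcomps_def by blast
    have "(u, s) \<in> (fadj dends F)\<^sup>*" using s(1) u by simp
    then have "(u, X1) \<in> (fadj dends F)\<^sup>*"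
      using fadj_rtrancl_sym[OF reach[OF s(2)]] by (rule rtrancl_trans)
    then show "K \<in> {?K}" using u fadj_component_eq by simp
  qed
  then show ?thesis using card_mono[of "{?K}"] by simp
qed

lemma gadget_circuits_empty:
  assumes "EX1Y1 \<in> F" "EY2X2 \<in> F" and DY: "DY1 \<in> F" "DY2 \<in> F"
  shows "gadget_circuits F = {}"
proof (rule equals0I)
  fix K assume "K \<in> gadget_circuits F"
  then obtain s where s: "s \<in> K" "s \<in> gadget" and K: "K \<in> fcomps dV dends F"
    and closed: "\<not> (\<exists>e\<in>F. dangling dends e \<and> set_mset (dends e) \<subseteq> K)"
    unfolding gadget_circuits_def circuits_def by blast
  have "(s, Y1) \<in> (fadj dends F)\<^sup>* \<or> (s, Y2) \<in> (fadj dends F)\<^sup>*"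
    using s(2) r_into_rtrancl[OF fadj_path_edges(1)[OF assms(1)]]
      fadj_rtrancl_sym[OF r_into_rtrancl[OF fadj_path_edges(3)[OF assms(2)]]]
    by (auto simp: gadget_def)
  then have "Y1 \<in> K \<or> Y2 \<in> K"
    using fcomps_closed[OF K s(1)] by blast
  then show False
    using closed DY by (auto simp: dangling_def)
qed

lemma q0_dbl_le_glue:
  assumes G: "even_factor V E ends G" "d1 \<in> G"
    and G': "even_factor V E ends G'" "\<forall>e\<in>G'. \<not> dangling ends e"
  shows "q0 dV dE dends \<le> enat (excess V ends G + excess V ends G' + 2)"
proof -
  define F where "F = glue G G' {EX1Y1, EY1Y2, EY2X2}"
  have S: "{EX1Y1, EY1Y2, EY2X2} \<subseteq> gadget_edges" by (simp add: gadget_edges_def)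
  have FE: "F \<subseteq> dE"
    unfolding F_def using G(1) G'(1) S by (intro glue_subset_dbl_E) (auto simp: even_factor_def)
  have mem: "EX1Y1 \<in> F" "EY1Y2 \<in> F" "EY2X2 \<in> F" "DY1 \<notin> F" "DY2 \<notin> F"
    by (auto simp: F_def glue_def)
  then have "deg_in dends F Y1 = 2" "deg_in dends F Y2 = 2"
    using deg_in_gadget(3,4)[OF FE] by simp_all
  note glued = glue_even_factor_excess[OF G G' S _ _ this[unfolded F_def], folded F_def]
  have "\<forall>e\<in>F. \<not> dangling dends e"
    using FE dangling_dbl_iff mem by auto
  then have "q0 dV dE dends \<le> enat (excess dV dends F)"
    unfolding q0_def using glued(1) by (intro INF_lower) simp
  also have "excess dV dends F \<le> excess V ends G + excess V ends G' + 2"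
    using glued(2) card_gadget_circuits_le_1[OF mem(1-3)] by simp
  finally show ?thesis by simp
qed

lemma q2_dbl_le_glue:
  assumes G: "even_factor V E ends G" "d1 \<in> G"
    and G': "even_factor V E ends G'" "\<forall>e\<in>G'. \<not> dangling ends e"
  shows "q2 dV dE dends \<le> enat (excess V ends G + excess V ends G')"
proof -
  define F where "F = glue G G' {EX1Y1, EY2X2, DY1, DY2}"
  have S: "{EX1Y1, EY2X2, DY1, DY2} \<subseteq> gadget_edges" by (simp add: gadget_edges_def)
  have FE: "F \<subseteq> dE"
    unfolding F_def using G(1) G'(1) S by (intro glue_subset_dbl_E) (auto simp: even_factor_def)
  have mem: "EX1Y1 \<in> F" "EY1Y2 \<notin> F" "EY2X2 \<in> F" "DY1 \<in> F" "DY2 \<in> F"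
    by (auto simp: F_def glue_def)
  then have "deg_in dends F Y1 = 2" "deg_in dends F Y2 = 2"
    using deg_in_gadget(3,4)[OF FE] by simp_all
  note glued = glue_even_factor_excess[OF G G' S _ _ this[unfolded F_def], folded F_def]
  have "{e\<in>F. dangling dends e} = {DY1, DY2}"
    using FE mem dangling_dbl_iff by auto
  then have "q2 dV dE dends \<le> enat (excess dV dends F)"
    unfolding q2_def using glued(1) by (intro INF_lower) simp
  also have "excess dV dends F = excess V ends G + excess V ends G'"
    using glued(2) gadget_circuits_empty[OF mem(1,3-5)] by simp
  finally show ?thesis .
qed

lemma q0_attained:
  assumes "q0 V E ends = enat m"
  obtains G where "even_factor V E ends G" "\<forall>e\<in>G. \<not> dangling ends e" "excess V ends G = m"
  using enat_INF_attained[OF assms[unfolded q0_def]] by auto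

lemma q2_attained:
  assumes "q2 V E ends = enat k"
  obtains G where "even_factor V E ends G" "d1 \<in> G" "excess V ends G = k"
proof -
  obtain G where G: "even_factor V E ends G" "card {e\<in>G. dangling ends e} = 2" "excess V ends G = k"
    using enat_INF_attained[OF assms[unfolded q2_def]] by auto
  then have "d1 \<in> G" using even_factor_dangling_edges[OF G(1)] by (auto split: if_splits)
  with G that show ?thesis by blast
qed

lemma q0_dbl_le: "q0 dV dE dends \<le> q2 V E ends + q0 V E ends + 2"
proof (cases "q2 V E ends"; cases "q0 V E ends")
  fix k m assume "q2 V E ends = enat k" and "q0 V E ends = enat m"
  with q2_attained q0_attained q0_dbl_le_glue show ?thesis
    by (metis plus_enat_simps(1) numeral_eq_enat)
qed simp_all

lemma q2_dbl_le: "q2 dV dE dends \<le> q2 V E ends + q0 V E ends"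
proof (cases "q2 V E ends"; cases "q0 V E ends")
  fix k m assume "q2 V E ends = enat k" and "q0 V E ends = enat m"
  with q2_attained q0_attained q2_dbl_le_glue show ?thesis
    by (metis plus_enat_simps(1))
qed simp_all

end

theorem lemma1:
  fixes V :: "'v set" and E :: "'e set" and ends :: "'e \<Rightarrow> 'v multiset"
    and d1 d2 :: 'e and a n :: nat
  assumes "is_pole 2 V E ends"
    and "d1 \<in> E" and "d2 \<in> E" and "d1 \<noteq> d2"
    and "dangling ends d1" and "dangling ends d2"
    and "tpole V E ends = (enat (a + 2), enat a, n)"
  shows "tpole (dbl_V V) (dbl_E E) (dbl_ends ends d1 d2) = (enat (2 * a + 4), enat (2 * a + 2), 2 * n + 4)"
proof -
  interpret two_pole V E ends d1 d2
    using assms(1-6) by unfold_locales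
  have q0: "q0 V E ends = enat (a + 2)" and q2: "q2 V E ends = enat a" and "card V = n"
    using assms(7) by (auto simp: tpole_def)
  have sum0: "q2 V E ends + q0 V E ends + 2 = enat (2 * a + 4)"
    using q0 q2 by (simp add: numeral_eq_enat)
  have sum2: "q2 V E ends + q0 V E ends = enat (2 * a + 2)"
    using q0 q2 by (simp add: mult_2)
  have min0: "min (2 * (a + 2)) (min (a + 2 + a + 2) (2 * a + 4)) = 2 * a + 4"
    and min2: "min (2 * (a + 2)) (min (a + 2 + a) (2 * a + 2)) = 2 * a + 2" by simp_all
  have "enat (2 * a + 4) \<le> q0 dV dE dends" and "enat (2 * a + 2) \<le> q2 dV dE dends"
    using q0_dbl_ge[of "a + 2" a, unfolded min0 q0 q2] q2_dbl_ge[of "a + 2" a, unfolded min2 q0 q2]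
    by simp_all
  then have "q0 dV dE dends = enat (2 * a + 4)" and "q2 dV dE dends = enat (2 * a + 2)"
    using q0_dbl_le[unfolded sum0] q2_dbl_le[unfolded sum2] by (simp_all add: antisym)
  then show ?thesis using card_dbl_V \<open>card V = n\<close> by (simp add: tpole_def)
qed

end
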